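(* For the modular data of the quantum double of $S_3$, each of the trace three modular invariants $Z_{24},Z_{42},Z_{35},Z_{53},Z_{44},Z_{(55)},Z_{(44)}$ has, up to equivalence, exactly one matching nimrep.
   Context: Primaries $0,\dots,7$, all self-conjugate, with $S=\frac16\begin{pmatrix}1&1&2&2&2&2&3&3\\1&1&2&2&2&2&-3&-3\\2&2&4&-2&-2&-2&0&0\\2&2&-2&4&-2&-2&0&0\\2&2&-2&-2&-2&4&0&0\\2&2&-2&-2&4&-2&0&0\\3&-3&0&0&0&0&3&-3\\3&-3&0&0&0&0&-3&3\end{pmatrix}$, fusion coefficients $N_{\lambda\mu}^\nu=\sum_\rho S_{\lambda\rho}S_{\mu\rho}\overline{S_{\nu\rho}}/S_{0\rho}$. Matrices are written as $\sum Z_{\lambda\mu}\chi_\lambda\chi_\mu^*$, and $st^*$ for linear forms is the matrix of products of coefficients. With $s_2=\chi_0+\chi_1+2\chi_2$, $s_3=\chi_0+\chi_1+2\chi_3$, $s_4=\chi_0+\chi_2+\chi_6$, $s_5=\chi_0+\chi_3+\chi_6$: $Z_{ij}=s_is_j^*$. $Z_{(44)}=|\chi_0+\chi_2|^2+\chi_1\chi_6^*+\chi_2\chi_6^*+\chi_6\chi_1^*+\chi_6\chi_2^*+|\chi_7|^2$, $Z_{(55)}=|\chi_0+\chi_3|^2+\chi_1\chi_6^*+\chi_3\chi_6^*+\chi_6\chi_1^*+\chi_6\chi_3^*+|\chi_7|^2$. A nimrep of dimension $n$: non-negative integer $n\times n$ matrices $G_\lambda$ with $G_0=I$, $G_{\bar\lambda}=G_\lambda^t$,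 $G_\lambda G_\mu=\sum_\nu N_{\lambda\mu}^\nu G_\nu$; nimreps are equivalent if conjugate by a common permutation matrix. $\mathrm{Exp}(Z)$ is the multiset with $Z_{\mu\mu}$ copies of $\mu$. A nimrep matches $Z$ if $n=\mathrm{Tr}\,Z$ and the $G_\lambda$ are simultaneously unitarily diagonalisable with joint eigenvalues $(S_{\lambda\mu}/S_{0\mu})_\lambda$, $\mu$ running through $\mathrm{Exp}(Z)$ with multiplicity. *)

theory Defs
  imports Complex_Main "HOL-Library.Multiset" "HOL-Combinatorics.Permutations"
begin

text \<open>Modular data of the quantum double of S3: primaries 0..7, all self-conjugate.\<close>

definition S_num :: "int list list" where
  "S_num = [[1,1,2,2,2,2,3,3],
            [1,1,2,2,2,2,-3,-3],
            [2,2,4,-2,-2,-2,0,0],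
            [2,2,-2,4,-2,-2,0,0],
            [2,2,-2,-2,-2,4,0,0],
            [2,2,-2,-2,4,-2,0,0],
            [3,-3,0,0,0,0,3,-3],
            [3,-3,0,0,0,0,-3,3]]"

definition S :: "nat \<Rightarrow> nat \<Rightarrow> complex" where
  "S l m = of_int (S_num ! l ! m) / 6"

definition prim_conj :: "nat \<Rightarrow> nat" where
  "prim_conj l = l"

definition fusion :: "nat \<Rightarrow> nat \<Rightarrow> nat \<Rightarrow> complex" where
  "fusion l m n = (\<Sum>r<8. S l r * S m r * cnj (S n r) / S 0 r)"

text \<open>Modular invariants as functions Z l m (coefficient of chi_l chi_m^*).\<close>

definition lin_prod :: "(nat \<Rightarrow> nat) \<Rightarrow> (nat \<Rightarrow> nat) \<Rightarrow> nat \<Rightarrow> nat \<Rightarrow> nat" where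
  "lin_prod s t l m = s l * t m"

definition vec_of :: "nat list \<Rightarrow> nat \<Rightarrow> nat" where
  "vec_of xs l = (if l < length xs then xs ! l else 0)"

definition s2 :: "nat \<Rightarrow> nat" where "s2 = vec_of [1,1,2,0,0,0,0,0]"
definition s3 :: "nat \<Rightarrow> nat" where "s3 = vec_of [1,1,0,2,0,0,0,0]"
definition s4 :: "nat \<Rightarrow> nat" where "s4 = vec_of [1,0,1,0,0,0,1,0]"
definition s5 :: "nat \<Rightarrow> nat" where "s5 = vec_of [1,0,0,1,0,0,1,0]"

definition mat_of :: "nat list list \<Rightarrow> nat \<Rightarrow> nat \<Rightarrow> nat" where
  "mat_of xss l m = (if l < length xss \<and> m < length (xss ! l) then xss ! l ! m else 0)"

definition Z24 where "Z24 = lin_prod s2 s4"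
definition Z42 where "Z42 = lin_prod s4 s2"
definition Z35 where "Z35 = lin_prod s3 s5"
definition Z53 where "Z53 = lin_prod s5 s3"
definition Z44 where "Z44 = lin_prod s4 s4"

text \<open>Z_(44) = |chi0+chi2|^2 + chi1 chi6^* + chi2 chi6^* + chi6 chi1^* + chi6 chi2^* + |chi7|^2\<close>
definition Z44p :: "nat \<Rightarrow> nat \<Rightarrow> nat" where
  "Z44p = mat_of [[1,0,1,0,0,0,0,0],
                  [0,0,0,0,0,0,1,0],
                  [1,0,1,0,0,0,1,0],
                  [0,0,0,0,0,0,0,0],
                  [0,0,0,0,0,0,0,0],
                  [0,0,0,0,0,0,0,0],
                  [0,1,1,0,0,0,0,0],
                  [0,0,0,0,0,0,0,1]]"

text \<open>Z_(55) = |chi0+chi3|^2 + chi1 chi6^* + chi3 chi6^* + chi6 chi1^* + chi6 chi3^* + |chi7|^2\<close>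
definition Z55p :: "nat \<Rightarrow> nat \<Rightarrow> nat" where
  "Z55p = mat_of [[1,0,0,1,0,0,0,0],
                  [0,0,0,0,0,0,1,0],
                  [0,0,0,0,0,0,0,0],
                  [1,0,0,1,0,0,1,0],
                  [0,0,0,0,0,0,0,0],
                  [0,0,0,0,0,0,0,0],
                  [0,1,0,1,0,0,0,0],
                  [0,0,0,0,0,0,0,1]]"

definition trace8 :: "(nat \<Rightarrow> nat \<Rightarrow> nat) \<Rightarrow> nat" where
  "trace8 Z = (\<Sum>m<8. Z m m)"

definition Exp :: "(nat \<Rightarrow> nat \<Rightarrow> nat) \<Rightarrow> nat multiset" where
  "Exp Z = (\<Sum>m<8. replicate_mset (Z m m) m)"

text \<open>A nimrep of dimension n: G l i j is the (i,j) entry of G_l, for l < 8 and i,j < n.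
  Entries are natural numbers (non-negative integers).\<close>
definition nimrep :: "nat \<Rightarrow> (nat \<Rightarrow> nat \<Rightarrow> nat \<Rightarrow> nat) \<Rightarrow> bool" where
  "nimrep n G \<longleftrightarrow>
     (\<forall>i<n. \<forall>j<n. G 0 i j = (if i = j then 1 else 0)) \<and>
     (\<forall>l<8. \<forall>i<n. \<forall>j<n. G (prim_conj l) i j = G l j i) \<and>
     (\<forall>l<8. \<forall>m<8. \<forall>i<n. \<forall>j<n.
        of_nat (\<Sum>k<n. G l i k * G m k j) = (\<Sum>v<8. fusion l m v * of_nat (G v i j)))"

definition nimrep_equiv ::
  "nat \<Rightarrow> (nat \<Rightarrow> nat \<Rightarrow> nat \<Rightarrow> nat) \<Rightarrow> nat \<Rightarrow> (nat \<Rightarrow> nat \<Rightarrow> nat \<Rightarrow> nat) \<Rightarrow> bool" where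
  "nimrep_equiv n G n' G' \<longleftrightarrow> n = n' \<and>
     (\<exists>p. p permutes {..<n} \<and> (\<forall>l<8. \<forall>i<n. \<forall>j<n. G' l i j = G l (p i) (p j)))"

definition unitary_mat :: "nat \<Rightarrow> (nat \<Rightarrow> nat \<Rightarrow> complex) \<Rightarrow> bool" where
  "unitary_mat n U \<longleftrightarrow>
     (\<forall>i<n. \<forall>j<n. (\<Sum>k<n. cnj (U k i) * U k j) = (if i = j then 1 else 0))"

definition matches :: "(nat \<Rightarrow> nat \<Rightarrow> nat) \<Rightarrow> nat \<Rightarrow> (nat \<Rightarrow> nat \<Rightarrow> nat \<Rightarrow> nat) \<Rightarrow> bool" where
  "matches Z n G \<longleftrightarrow> nimrep n G \<and> n = trace8 Z \<and>
     (\<exists>U mu. unitary_mat n U \<and> mset (map mu [0..<n]) = Exp Z \<and>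
        (\<forall>l<8. \<forall>i<n. \<forall>j<n.
           (\<Sum>a<n. \<Sum>b<n. cnj (U a i) * of_nat (G l a b) * U b j)
             = (if i = j then S l (mu i) / S 0 (mu i) else 0)))"

end

theory Submission
  imports Defs "Jordan_Normal_Form.Determinant"
begin

(* A nimrep matching Z has G_l = U diag(S_lm / S_0m) U^* with m running through Exp Z. Hence
   every linear relation between the eigenvalue vectors (S_lm / S_0m)_{m in Exp Z} holds between
   the G_l, and the traces of the G_l are sums of eigenvalues. For Exp Z = {0,2,2} and {0,2,6}
   this leaves one, resp. two, unknown non-negative integer 3x3 matrices, and the fusion rules
   together with the traces pin them down up to a permutation of the basis: the all-ones matrix,
   resp. the nimrep of the sign and the two-dimensional representation of S_3. Conversely, by
   the Verlinde formula, a family with an orthogonal integer eigenbasis and these joint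
   eigenvalues is a nimrep. The transpositions (2 3) and (6 7) of primaries fix S, so they carry
   the nimreps for {0,2,2} and {0,2,6} to those for {0,3,3}, {0,2,7} and {0,3,7}; and matching
   depends on Z only through Exp Z. *)

lemma less_3_iff: "(i::nat) < 3 \<longleftrightarrow> i \<in> {0, 1, 2}"
  by auto

lemma less_8_iff: "(l::nat) < 8 \<longleftrightarrow> l \<in> {0, 1, 2, 3, 4, 5, 6, 7}"
  by auto

lemma less_8_cases:
  "(l::nat) < 8 \<Longrightarrow> l = 0 \<or> l = 1 \<or> l = 2 \<or> l = 3 \<or> l = 4 \<or> l = 5 \<or> l = 6 \<or> l = 7"
  by auto

lemma sum_lessThan_3: "(\<Sum>i<3. (f :: nat \<Rightarrow> 'a :: comm_monoid_add) i) = f 0 + f 1 + f 2"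
  by (simp add: eval_nat_numeral lessThan_Suc add_ac)

lemma sum_lessThan_8:
  "(\<Sum>i<8. (f :: nat \<Rightarrow> 'a :: comm_monoid_add) i) = f 0 + f 1 + f 2 + f 3 + f 4 + f 5 + f 6 + f 7"
  by (simp add: eval_nat_numeral lessThan_Suc add_ac)

section \<open>The modular S-matrix\<close>

definition eigval :: "nat \<Rightarrow> nat \<Rightarrow> complex" where
  "eigval l m = S l m / S 0 m"

definition eigval_int :: "nat \<Rightarrow> nat \<Rightarrow> int" where
  "eigval_int l m = S_num ! l ! m div S_num ! 0 ! m"

lemma eigval_eq_of_int: "l < 8 \<Longrightarrow> m < 8 \<Longrightarrow> eigval l m = of_int (eigval_int l m)"
  unfolding less_8_iff by (auto simp: eigval_def eigval_int_def S_def S_num_def)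

lemma S_vacuum_nonzero: "m < 8 \<Longrightarrow> S 0 m \<noteq> 0"
  unfolding less_8_iff by (auto simp: S_def S_num_def)

lemma S_unitary:
  "r < 8 \<Longrightarrow> m < 8 \<Longrightarrow> (\<Sum>v<8. cnj (S v r) * S v m) = (if r = m then 1 else 0)"
  unfolding less_8_iff by (auto simp: sum_lessThan_8 S_def S_num_def)

lemma cnj_eigval: "cnj (eigval l m) = eigval l m"
  by (simp add: eigval_def S_def)

lemma eigval_vacuum: "m < 8 \<Longrightarrow> eigval 0 m = 1"
  by (simp add: eigval_def S_vacuum_nonzero)

lemma eigval_mult_fusion:
  assumes "l < 8" "m < 8" "x < 8"
  shows "eigval l x * eigval m x = (\<Sum>v<8. fusion l m v * eigval v x)"
proof -
  have "(\<Sum>v<8. fusion l m v * eigval v x)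
      = (\<Sum>v<8. \<Sum>r<8. S l r * S m r / S 0 r * (cnj (S v r) * S v x / S 0 x))"
    unfolding fusion_def eigval_def
    by (simp add: sum_distrib_left sum_distrib_right sum_divide_distrib divide_divide_eq_left mult_ac)
  also have "\<dots> = (\<Sum>r<8. S l r * S m r / S 0 r * (\<Sum>v<8. cnj (S v r) * S v x / S 0 x))"
    by (subst sum.swap) (simp add: sum_distrib_left)
  also have "\<dots> = (\<Sum>r<8. if r = x then S l r * S m r / S 0 r / S 0 x else 0)"
    using \<open>x < 8\<close> by (intro sum.cong) (simp_all add: S_unitary flip: sum_divide_distrib)
  also have "\<dots> = S l x * S m x / S 0 x / S 0 x"
    using \<open>x < 8\<close> by simp
  finally show ?thesis
    by (simp add: eigval_def)
qed

section \<open>Unitary matrices\<close>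

lemma unitary_mat_right_inverse:
  assumes "unitary_mat n U"
  shows "mat n n (\<lambda>(i, j). U i j) * mat n n (\<lambda>(i, j). cnj (U j i)) = 1\<^sub>m n"
proof -
  have "mat n n (\<lambda>(i, j). cnj (U j i)) * mat n n (\<lambda>(i, j). U i j) = 1\<^sub>m n"
    using assms unfolding unitary_mat_def
    by (intro eq_matI) (auto simp: scalar_prod_def lessThan_atLeast0)
  then show ?thesis
    by (rule mat_mult_left_right_inverse[rotated 2]) auto
qed

lemma unitary_mat_rows:
  assumes "unitary_mat n U" "i < n" "j < n"
  shows "(\<Sum>k<n. U i k * cnj (U j k)) = (if i = j then 1 else 0)"
  using arg_cong[OF unitary_mat_right_inverse[OF assms(1)], of "\<lambda>A. A $$ (i, j)"] assms(2,3)
  by (simp add: scalar_prod_def lessThan_atLeast0)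

lemma unitary_conj_diagonal_imp_spectral_sum:
  fixes U X :: "nat \<Rightarrow> nat \<Rightarrow> complex" and d :: "nat \<Rightarrow> complex"
  assumes "unitary_mat n U"
    and diag: "\<forall>i<n. \<forall>j<n. (\<Sum>a<n. \<Sum>b<n. cnj (U a i) * X a b * U b j) = (if i = j then d i else 0)"
    and "i < n" "j < n"
  shows "X i j = (\<Sum>k<n. U i k * d k * cnj (U j k))"
proof -
  define A where "A = mat n n (\<lambda>(i, j). cnj (U j i))"
  define B where "B = mat n n (\<lambda>(i, j). U i j)"
  define M where "M = mat n n (\<lambda>(i, j). X i j)"
  define D where "D = mat n n (\<lambda>(i, j). if i = j then d i else 0)"
  have dims: "A \<in> carrier_mat n n" "B \<in> carrier_mat n n" "M \<in> carrier_mat n n"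
    by (simp_all add: A_def B_def M_def)
  have AMB: "A * M * B = D"
  proof (rule eq_matI)
    fix i j assume "i < dim_row D" "j < dim_col D"
    then have "(A * M * B) $$ (i, j) = (\<Sum>b<n. (\<Sum>a<n. cnj (U a i) * X a b) * U b j)"
      by (simp add: A_def B_def M_def D_def scalar_prod_def lessThan_atLeast0)
    also have "\<dots> = (\<Sum>a<n. \<Sum>b<n. cnj (U a i) * X a b * U b j)"
      by (subst sum.swap) (simp add: sum_distrib_right)
    also have "\<dots> = D $$ (i, j)"
      using diag \<open>i < dim_row D\<close> \<open>j < dim_col D\<close> by (simp add: D_def)
    finally show "(A * M * B) $$ (i, j) = D $$ (i, j)" .
  qed (simp_all add: A_def B_def D_def)
  have "M = (B * A) * M * (B * A)"
    using dims unitary_mat_right_inverse[OF assms(1)] by (simp add: A_def B_def)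
  also have "\<dots> = B * (A * M * B) * A"
    using dims by (simp add: assoc_mult_mat[of _ n n _ n _ n])
  finally have "M = B * D * A"
    by (simp add: AMB)
  then have "X i j = (B * D * A) $$ (i, j)"
    using \<open>i < n\<close> \<open>j < n\<close> by (metis M_def index_mat(1) case_prod_conv)
  also have "\<dots> = (\<Sum>k<n. (\<Sum>k'<n. U i k' * (if k' = k then d k' else 0)) * cnj (U j k))"
    using \<open>i < n\<close> \<open>j < n\<close> by (simp add: A_def B_def D_def scalar_prod_def lessThan_atLeast0)
  also have "\<dots> = (\<Sum>k<n. U i k * d k * cnj (U j k))"
    by (simp add: if_distrib cong: if_cong)
  finally show ?thesis .
qed

section \<open>Nimreps with a prescribed spectrum\<close>

definition matches_spectrum :: "nat multiset \<Rightarrow> nat \<Rightarrow> (nat \<Rightarrow> nat \<Rightarrow> nat \<Rightarrow> nat) \<Rightarrow> bool" where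
  "matches_spectrum M n G \<longleftrightarrow> nimrep n G \<and>
     (\<exists>U mu. unitary_mat n U \<and> mset (map mu [0..<n]) = M \<and>
        (\<forall>l<8. \<forall>i<n. \<forall>j<n.
           (\<Sum>a<n. \<Sum>b<n. cnj (U a i) * of_nat (G l a b) * U b j)
             = (if i = j then eigval l (mu i) else 0)))"

lemma size_Exp: "size (Exp Z) = trace8 Z"
  by (simp add: Exp_def trace8_def)

lemma matches_iff_matches_spectrum: "matches Z n G \<longleftrightarrow> matches_spectrum (Exp Z) n G"
proof
  assume "matches_spectrum (Exp Z) n G"
  then obtain mu where "mset (map mu [0..<n]) = Exp Z"
    unfolding matches_spectrum_def by blast
  then have "n = trace8 Z"
    by (metis size_Exp size_mset length_map length_upt diff_zero)
  with \<open>matches_spectrum (Exp Z) n G\<close> show "matches Z n G"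
    unfolding matches_def matches_spectrum_def eigval_def by blast
next
  assume "matches Z n G"
  then show "matches_spectrum (Exp Z) n G"
    unfolding matches_def matches_spectrum_def eigval_def by blast
qed

lemma matches_spectrum_size: "matches_spectrum M n G \<Longrightarrow> n = size M"
  unfolding matches_spectrum_def by (metis size_mset length_map length_upt diff_zero)

definition has_unique_nimrep :: "nat multiset \<Rightarrow> bool" where
  "has_unique_nimrep M \<longleftrightarrow> (\<exists>n G. matches_spectrum M n G) \<and>
     (\<forall>n G n' G'. matches_spectrum M n G \<longrightarrow> matches_spectrum M n' G' \<longrightarrow> nimrep_equiv n G n' G')"

lemma matches_spectrum_spectral_sum:
  assumes "matches_spectrum M n G"
  obtains U mu where "unitary_mat n U" "mset (map mu [0..<n]) = M"
    "\<And>l i j. l < 8 \<Longrightarrow> i < n \<Longrightarrow> j < n \<Longrightarrow>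
       of_nat (G l i j) = (\<Sum>k<n. U i k * eigval l (mu k) * cnj (U j k))"
proof -
  from assms obtain U mu where U: "unitary_mat n U" and mu: "mset (map mu [0..<n]) = M"
    and diag: "\<forall>l<8. \<forall>i<n. \<forall>j<n. (\<Sum>a<n. \<Sum>b<n. cnj (U a i) * of_nat (G l a b) * U b j)
                 = (if i = j then eigval l (mu i) else 0)"
    unfolding matches_spectrum_def by blast
  show thesis
  proof (rule that[OF U mu])
    fix l i j :: nat assume "l < 8" "i < n" "j < n"
    with diag show "of_nat (G l i j) = (\<Sum>k<n. U i k * eigval l (mu k) * cnj (U j k))"
      by (intro unitary_conj_diagonal_imp_spectral_sum[OF U]) auto
  qed
qed

lemma mset_map_upt_mem: "mset (map mu [0..<n]) = M \<Longrightarrow> k < n \<Longrightarrow> mu k \<in># M"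
  by auto

lemma sum_mset_mset_map_upt:
  assumes "mset (map mu [0..<n]) = M"
  shows "(\<Sum>k<n. f (mu k)) = (\<Sum>m\<in>#M. f m)"
proof -
  have "(\<Sum>k<n. f (mu k)) = sum_list (map f (map mu [0..<n]))"
    by (simp add: sum_set_upt_conv_sum_list_nat[symmetric] atLeast_upt lessThan_atLeast0 comp_def)
  also have "\<dots> = (\<Sum>m\<in>#M. f m)"
    by (metis assms mset_map sum_mset_sum_list)
  finally show ?thesis .
qed

lemma matches_spectrum_trace:
  assumes "matches_spectrum M n G" "l < 8" and eigval_sum: "(\<Sum>m\<in>#M. eigval l m) = of_nat t"
  shows "(\<Sum>i<n. G l i i) = t"
proof -
  obtain U mu where U: "unitary_mat n U" and mu: "mset (map mu [0..<n]) = M"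
    and G: "\<And>i j. i < n \<Longrightarrow> j < n \<Longrightarrow> of_nat (G l i j) = (\<Sum>k<n. U i k * eigval l (mu k) * cnj (U j k))"
    using matches_spectrum_spectral_sum[OF assms(1)] \<open>l < 8\<close> by metis
  have "(of_nat (\<Sum>i<n. G l i i) :: complex) = (\<Sum>i<n. \<Sum>k<n. U i k * eigval l (mu k) * cnj (U i k))"
    by (simp add: G)
  also have "\<dots> = (\<Sum>k<n. eigval l (mu k) * (\<Sum>i<n. cnj (U i k) * U i k))"
    by (subst sum.swap) (simp add: sum_distrib_left mult_ac)
  also have "\<dots> = (\<Sum>k<n. eigval l (mu k))"
    using U by (simp add: unitary_mat_def)
  also have "\<dots> = of_nat t"
    using sum_mset_mset_map_upt[OF mu, of "eigval l"] eigval_sum by simp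
  finally show ?thesis
    by (simp only: of_nat_eq_iff)
qed

lemma matches_spectrum_linear_relation:
  assumes "matches_spectrum M n G" "l < 8" "set vs \<subseteq> {..<8}"
    and eig: "\<forall>m\<in>#M. eigval l m = (\<Sum>v\<leftarrow>vs. eigval v m)"
    and "i < n" "j < n"
  shows "G l i j = (\<Sum>v\<leftarrow>vs. G v i j)"
proof -
  obtain U mu where mu: "mset (map mu [0..<n]) = M"
    and G: "\<And>l. l < 8 \<Longrightarrow> of_nat (G l i j) = (\<Sum>k<n. U i k * eigval l (mu k) * cnj (U j k))"
    using matches_spectrum_spectral_sum[OF assms(1)] \<open>i < n\<close> \<open>j < n\<close> by metis
  have "(of_nat (G l i j) :: complex) = (\<Sum>k<n. U i k * (\<Sum>v\<leftarrow>vs. eigval v (mu k)) * cnj (U j k))"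
    using G[OF \<open>l < 8\<close>] eig mset_map_upt_mem[OF mu] by simp
  also have "\<dots> = (\<Sum>v\<leftarrow>vs. \<Sum>k<n. U i k * eigval v (mu k) * cnj (U j k))"
    by (induction vs) (simp_all add: distrib_left distrib_right sum.distrib)
  also have "\<dots> = of_nat (\<Sum>v\<leftarrow>vs. G v i j)"
    using \<open>set vs \<subseteq> {..<8}\<close> by (induction vs) (simp_all add: G)
  finally show ?thesis
    by (metis of_nat_eq_iff)
qed

lemma spectral_sum_eigenvector:
  assumes U: "unitary_mat n U"
    and G: "\<forall>i<n. \<forall>j<n. of_nat (G i j) = (\<Sum>k<n. U i k * e k * cnj (U j k))"
    and "i < n" "q < n"
  shows "(\<Sum>k<n. of_nat (G i k) * U k q) = U i q * e q"
proof -
  have "(\<Sum>k<n. of_nat (G i k) * U k q) = (\<Sum>k<n. \<Sum>p<n. U i p * e p * (cnj (U k p) * U k q))"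
    using G \<open>i < n\<close> by (simp add: sum_distrib_left sum_distrib_right mult_ac)
  also have "\<dots> = (\<Sum>p<n. U i p * e p * (\<Sum>k<n. cnj (U k p) * U k q))"
    by (subst sum.swap) (simp add: sum_distrib_left)
  also have "\<dots> = (\<Sum>p<n. if p = q then U i p * e p else 0)"
    using U \<open>q < n\<close> unfolding unitary_mat_def by (intro sum.cong) auto
  finally show ?thesis
    using \<open>q < n\<close> by simp
qed

lemma spectral_sum_mult:
  assumes U: "unitary_mat n U" and mu: "\<forall>k<n. mu k < 8"
    and G: "\<forall>l<8. \<forall>i<n. \<forall>j<n. of_nat (G l i j) = (\<Sum>k<n. U i k * eigval l (mu k) * cnj (U j k))"
    and "l < 8" "m < 8" "i < n" "j < n"
  shows "of_nat (\<Sum>k<n. G l i k * G m k j) = (\<Sum>v<8. fusion l m v * of_nat (G v i j))"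
proof -
  let ?e = "\<lambda>l k. eigval l (mu k)"
  have "(of_nat (\<Sum>k<n. G l i k * G m k j) :: complex)
      = (\<Sum>k<n. \<Sum>q<n. of_nat (G l i k) * U k q * (?e m q * cnj (U j q)))"
    using G \<open>m < 8\<close> \<open>j < n\<close> by (simp add: sum_distrib_left mult_ac)
  also have "\<dots> = (\<Sum>q<n. (\<Sum>k<n. of_nat (G l i k) * U k q) * (?e m q * cnj (U j q)))"
    by (subst sum.swap) (simp add: sum_distrib_right)
  also have "\<dots> = (\<Sum>q<n. U i q * (?e l q * ?e m q) * cnj (U j q))"
  proof (rule sum.cong[OF refl])
    fix q assume "q \<in> {..<n}"
    have "(\<Sum>k<n. of_nat (G l i k) * U k q) = U i q * ?e l q"
      by (rule spectral_sum_eigenvector[OF U _ \<open>i < n\<close>]) (use G \<open>l < 8\<close> \<open>q \<in> {..<n}\<close> in auto)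
    then show "(\<Sum>k<n. of_nat (G l i k) * U k q) * (?e m q * cnj (U j q))
        = U i q * (?e l q * ?e m q) * cnj (U j q)"
      by (simp add: mult_ac)
  qed
  also have "\<dots> = (\<Sum>q<n. \<Sum>v<8. fusion l m v * (U i q * ?e v q * cnj (U j q)))"
    using mu \<open>l < 8\<close> \<open>m < 8\<close> by (simp add: eigval_mult_fusion sum_distrib_left sum_distrib_right mult_ac)
  also have "\<dots> = (\<Sum>v<8. fusion l m v * (\<Sum>q<n. U i q * ?e v q * cnj (U j q)))"
    by (subst sum.swap) (simp add: sum_distrib_left)
  also have "\<dots> = (\<Sum>v<8. fusion l m v * of_nat (G v i j))"
    using G \<open>i < n\<close> \<open>j < n\<close> by simp
  finally show ?thesis .
qed

lemma nimrep_of_spectral_sum: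
  assumes U: "unitary_mat n U" and mu: "\<forall>k<n. mu k < 8"
    and G: "\<forall>l<8. \<forall>i<n. \<forall>j<n. of_nat (G l i j) = (\<Sum>k<n. U i k * eigval l (mu k) * cnj (U j k))"
  shows "nimrep n G"
  unfolding nimrep_def prim_conj_def
proof (intro conjI allI impI)
  fix i j assume "i < n" "j < n"
  have "(of_nat (G 0 i j) :: complex) = (\<Sum>k<n. U i k * cnj (U j k))"
    using G \<open>i < n\<close> \<open>j < n\<close> mu by (simp add: eigval_vacuum)
  then show "G 0 i j = (if i = j then 1 else 0)"
    using unitary_mat_rows[OF U \<open>i < n\<close> \<open>j < n\<close>] by (metis of_nat_0 of_nat_1 of_nat_eq_iff)
next
  fix l i j :: nat assume "l < 8" "i < n" "j < n"
  have "(of_nat (G l j i) :: complex) = (\<Sum>k<n. U j k * eigval l (mu k) * cnj (U i k))"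
    using G \<open>l < 8\<close> \<open>i < n\<close> \<open>j < n\<close> by simp
  also have "\<dots> = cnj (\<Sum>k<n. U i k * eigval l (mu k) * cnj (U j k))"
    by (simp add: cnj_sum cnj_eigval mult_ac)
  also have "\<dots> = of_nat (G l i j)"
    using G \<open>l < 8\<close> \<open>i < n\<close> \<open>j < n\<close> by (metis complex_cnj_of_nat)
  finally show "G l i j = G l j i"
    by (metis of_nat_eq_iff)
next
  fix l m i j :: nat assume "l < 8" "m < 8" "i < n" "j < n"
  then show "of_nat (\<Sum>k<n. G l i k * G m k j) = (\<Sum>v<8. fusion l m v * of_nat (G v i j))"
    by (rule spectral_sum_mult[OF U mu G])
qed

lemma unitary_mat_normalised_columns:
  fixes V :: "nat \<Rightarrow> nat \<Rightarrow> int"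
  assumes orthogonal: "\<forall>i<n. \<forall>j<n. i \<noteq> j \<longrightarrow> (\<Sum>k<n. V k i * V k j) = 0"
    and nonzero: "\<forall>i<n. (\<Sum>k<n. V k i * V k i) \<noteq> 0"
  shows "unitary_mat n (\<lambda>a i. of_int (V a i) / of_real (sqrt (of_int (\<Sum>k<n. V k i * V k i))))"
  unfolding unitary_mat_def
proof (intro allI impI)
  fix i j assume "i < n" "j < n"
  define w where "w i = (\<Sum>k<n. V k i * V k i)" for i
  define s :: "nat \<Rightarrow> complex" where "s i = of_real (sqrt (of_int (w i)))" for i
  have "(\<Sum>k<n. cnj (of_int (V k i) / s i) * (of_int (V k j) / s j))
      = of_int (\<Sum>k<n. V k i * V k j) / (s i * s j)"
    by (simp add: s_def sum_divide_distrib)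
  also have "\<dots> = (if i = j then 1 else 0)"
  proof (cases "i = j")
    case True
    have "0 \<le> w i"
      unfolding w_def by (intro sum_nonneg) simp
    with nonzero \<open>i < n\<close> have "0 < w i"
      unfolding w_def by auto
    then have "s i * s i = of_int (w i)" "(of_int (w i) :: complex) \<noteq> 0"
      unfolding s_def by (simp_all flip: of_real_mult)
    with True show ?thesis
      by (simp flip: w_def)
  next
    case False
    then show ?thesis
      using orthogonal \<open>i < n\<close> \<open>j < n\<close> by simp
  qed
  finally show "(\<Sum>k<n. cnj (of_int (V k i) / of_real (sqrt (of_int (w i)))) *
      (of_int (V k j) / of_real (sqrt (of_int (w j))))) = (if i = j then 1 else 0)"
    unfolding s_def .
qed

lemma matches_spectrum_of_orthogonal_eigenbasis:
  fixes V :: "nat \<Rightarrow> nat \<Rightarrow> int"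
  assumes mu: "mset (map mu [0..<n]) = M" "set_mset M \<subseteq> {..<8}"
    and orthogonal: "\<forall>i<n. \<forall>j<n. i \<noteq> j \<longrightarrow> (\<Sum>k<n. V k i * V k j) = 0"
    and nonzero: "\<forall>i<n. (\<Sum>k<n. V k i * V k i) \<noteq> 0"
    and eigenvector: "\<forall>l<8. \<forall>i<n. \<forall>a<n. (\<Sum>b<n. int (G l a b) * V b i) = eigval_int l (mu i) * V a i"
  shows "matches_spectrum M n G"
proof -
  define U :: "nat \<Rightarrow> nat \<Rightarrow> complex"
    where "U a i = of_int (V a i) / of_real (sqrt (of_int (\<Sum>k<n. V k i * V k i)))" for a i
  have U: "unitary_mat n U"
    unfolding U_def by (rule unitary_mat_normalised_columns[OF orthogonal nonzero])
  have mu_less: "\<forall>k<n. mu k < 8"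
    using mset_map_upt_mem[OF mu(1)] mu(2) by auto
  have U_eigenvector: "(\<Sum>b<n. of_nat (G l a b) * U b i) = eigval l (mu i) * U a i"
    if "l < 8" "i < n" "a < n" for l i a
  proof -
    have "(\<Sum>b<n. of_nat (G l a b) * U b i)
        = of_int (\<Sum>b<n. int (G l a b) * V b i) / of_real (sqrt (of_int (\<Sum>k<n. V k i * V k i)))"
      by (simp add: U_def sum_divide_distrib)
    then show ?thesis
      using eigenvector eigval_eq_of_int[OF \<open>l < 8\<close>] mu_less that by (simp add: U_def)
  qed
  have diag: "(\<Sum>a<n. \<Sum>b<n. cnj (U a i) * of_nat (G l a b) * U b j)
      = (if i = j then eigval l (mu i) else 0)" if "l < 8" "i < n" "j < n" for l i j
  proof -
    have "(\<Sum>a<n. \<Sum>b<n. cnj (U a i) * of_nat (G l a b) * U b j)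
        = (\<Sum>a<n. cnj (U a i) * (\<Sum>b<n. of_nat (G l a b) * U b j))"
      by (simp add: sum_distrib_left mult_ac)
    also have "\<dots> = eigval l (mu j) * (\<Sum>a<n. cnj (U a i) * U a j)"
      using U_eigenvector that by (simp add: sum_distrib_left mult_ac)
    finally show ?thesis
      using U that unfolding unitary_mat_def by simp
  qed
  then have "\<forall>l<8. \<forall>i<n. \<forall>j<n. of_nat (G l i j) = (\<Sum>k<n. U i k * eigval l (mu k) * cnj (U j k))"
    by (auto intro: unitary_conj_diagonal_imp_spectral_sum[OF U])
  then have "nimrep n G"
    by (rule nimrep_of_spectral_sum[OF U mu_less])
  then show ?thesis
    unfolding matches_spectrum_def using U mu(1) diag by blast
qed

lemma has_unique_nimrep_if_conjugate:
  assumes "matches_spectrum M n\<^sub>0 K"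
    and conj: "\<And>n G. matches_spectrum M n G \<Longrightarrow>
      \<exists>p. p permutes {..<n} \<and> (\<forall>l<8. \<forall>i<n. \<forall>j<n. G l i j = K l (p i) (p j))"
  shows "has_unique_nimrep M"
  unfolding has_unique_nimrep_def
proof (intro conjI allI impI)
  show "\<exists>n G. matches_spectrum M n G"
    using assms(1) by blast
next
  fix n G n' G' assume G: "matches_spectrum M n G" and G': "matches_spectrum M n' G'"
  have "n' = n"
    using matches_spectrum_size[OF G] matches_spectrum_size[OF G'] by simp
  obtain p where p: "p permutes {..<n}" and Gp: "\<forall>l<8. \<forall>i<n. \<forall>j<n. G l i j = K l (p i) (p j)"
    using conj[OF G] by blast
  obtain q where q: "q permutes {..<n}" and Gq: "\<forall>l<8. \<forall>i<n. \<forall>j<n. G' l i j = K l (q i) (q j)"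
    using conj[OF G'] \<open>n' = n\<close> by blast
  have "G' l i j = G l ((inv_into UNIV p \<circ> q) i) ((inv_into UNIV p \<circ> q) j)"
    if "l < 8" "i < n" "j < n" for l i j
  proof -
    have "inv_into UNIV p (q i) < n" "inv_into UNIV p (q j) < n"
      using that permutes_in_image[OF q] permutes_in_image[OF permutes_inv[OF p]] by auto
    then show ?thesis
      using that Gp Gq by (simp add: permutes_inverses(1)[OF p])
  qed
  moreover have "inv_into UNIV p \<circ> q permutes {..<n}"
    using permutes_compose[OF q permutes_inv[OF p]] .
  ultimately show "nimrep_equiv n G n' G'"
    unfolding nimrep_equiv_def using \<open>n' = n\<close> by blast
qed

lemma nimrep_fusion_rule:
  assumes "nimrep n G" "l < 8" "m < 8" "i < n" "j < n"
    and fusion_rule: "\<And>x. (\<Sum>v<8. fusion l m v * x v) = (\<Sum>v\<leftarrow>vs. x v)"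
  shows "(\<Sum>k<n. G l i k * G m k j) = (\<Sum>v\<leftarrow>vs. G v i j)"
proof -
  have "(of_nat (\<Sum>k<n. G l i k * G m k j) :: complex) = (\<Sum>v<8. fusion l m v * of_nat (G v i j))"
    using assms(1-5) unfolding nimrep_def by blast
  also have "\<dots> = (\<Sum>v\<leftarrow>vs. of_nat (G v i j))"
    by (rule fusion_rule)
  also have "\<dots> = of_nat (\<Sum>v\<leftarrow>vs. G v i j)"
    by (induction vs) simp_all
  finally show ?thesis
    by (simp only: of_nat_eq_iff)
qed

section \<open>Symmetries of the S-matrix\<close>

definition S_involution :: "(nat \<Rightarrow> nat) \<Rightarrow> bool" where
  "S_involution \<tau> \<longleftrightarrow> \<tau> permutes {..<8} \<and> (\<forall>l. \<tau> (\<tau> l) = l) \<and> \<tau> 0 = 0 \<and>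
     (\<forall>l<8. \<forall>m<8. S (\<tau> l) (\<tau> m) = S l m)"

lemma S_involution_less:
  assumes "S_involution \<tau>" "l < 8"
  shows "\<tau> l < 8"
  using assms permutes_in_image unfolding S_involution_def by fastforce

lemma fusion_S_involution:
  assumes "S_involution \<tau>" "l < 8" "m < 8" "v < 8"
  shows "fusion (\<tau> l) (\<tau> m) (\<tau> v) = fusion l m v"
proof -
  have \<tau>: "\<tau> permutes {..<8}" "\<tau> 0 = 0" "\<forall>l<8. \<forall>m<8. S (\<tau> l) (\<tau> m) = S l m"
    using assms(1) unfolding S_involution_def by auto
  have "fusion (\<tau> l) (\<tau> m) (\<tau> v)
      = (\<Sum>r<8. S (\<tau> l) (\<tau> r) * S (\<tau> m) (\<tau> r) * cnj (S (\<tau> v) (\<tau> r)) / S (\<tau> 0) (\<tau> r))"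
    unfolding fusion_def by (subst sum.permute[OF \<tau>(1)]) (simp add: \<tau>(2))
  also have "\<dots> = fusion l m v"
    unfolding fusion_def using \<tau>(3) assms(2-4) by (intro sum.cong) auto
  finally show ?thesis .
qed

lemma eigval_S_involution:
  assumes "S_involution \<tau>" "l < 8" "m < 8"
  shows "eigval (\<tau> l) (\<tau> m) = eigval l m"
proof -
  have "\<tau> 0 = 0" "\<forall>l<8. \<forall>m<8. S (\<tau> l) (\<tau> m) = S l m"
    using assms(1) unfolding S_involution_def by auto
  then have "S (\<tau> l) (\<tau> m) = S l m" "S 0 (\<tau> m) = S 0 m"
    using assms(2,3) by (auto dest: spec[of _ 0])
  then show ?thesis
    unfolding eigval_def by simp
qed

lemma nimrep_relabel:
  assumes "S_involution \<tau>" "nimrep n G"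
  shows "nimrep n (\<lambda>l. G (\<tau> l))"
proof -
  have \<tau>: "\<tau> permutes {..<8}" "\<tau> 0 = 0"
    using assms(1) unfolding S_involution_def by auto
  have "of_nat (\<Sum>k<n. G (\<tau> l) i k * G (\<tau> m) k j) = (\<Sum>v<8. fusion l m v * of_nat (G (\<tau> v) i j))"
    if "l < 8" "m < 8" "i < n" "j < n" for l m i j
  proof -
    have "of_nat (\<Sum>k<n. G (\<tau> l) i k * G (\<tau> m) k j) = (\<Sum>v<8. fusion (\<tau> l) (\<tau> m) v * of_nat (G v i j))"
      using assms(2) that S_involution_less[OF assms(1)] unfolding nimrep_def by blast
    also have "\<dots> = (\<Sum>v<8. fusion (\<tau> l) (\<tau> m) (\<tau> v) * of_nat (G (\<tau> v) i j))"
      by (subst sum.permute[OF \<tau>(1)]) simp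
    also have "\<dots> = (\<Sum>v<8. fusion l m v * of_nat (G (\<tau> v) i j))"
      using that by (intro sum.cong) (simp_all add: fusion_S_involution[OF assms(1)])
    finally show ?thesis .
  qed
  moreover have "G (\<tau> l) i j = G (\<tau> l) j i" if "l < 8" "i < n" "j < n" for l i j
    using assms(2) that S_involution_less[OF assms(1)] unfolding nimrep_def prim_conj_def by blast
  ultimately show ?thesis
    using assms(2) unfolding nimrep_def prim_conj_def by (simp add: \<tau>(2))
qed

lemma matches_spectrum_relabel:
  assumes "S_involution \<tau>" "set_mset M \<subseteq> {..<8}" "matches_spectrum M n G"
  shows "matches_spectrum (image_mset \<tau> M) n (\<lambda>l. G (\<tau> l))"
proof -
  obtain U mu where U: "unitary_mat n U" and mu: "mset (map mu [0..<n]) = M"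
    and diag: "\<forall>l<8. \<forall>i<n. \<forall>j<n. (\<Sum>a<n. \<Sum>b<n. cnj (U a i) * of_nat (G l a b) * U b j)
                 = (if i = j then eigval l (mu i) else 0)"
    using assms(3) unfolding matches_spectrum_def by blast
  have "eigval (\<tau> l) (mu i) = eigval l (\<tau> (mu i))" if "l < 8" "i < n" for l i
  proof -
    have "\<tau> (mu i) < 8"
      using mset_map_upt_mem[OF mu \<open>i < n\<close>] assms(2) S_involution_less[OF assms(1)] by auto
    then have "eigval (\<tau> l) (\<tau> (\<tau> (mu i))) = eigval l (\<tau> (mu i))"
      by (rule eigval_S_involution[OF assms(1) \<open>l < 8\<close>])
    then show ?thesis
      using assms(1) unfolding S_involution_def by simp
  qed
  then have "\<forall>l<8. \<forall>i<n. \<forall>j<n. (\<Sum>a<n. \<Sum>b<n. cnj (U a i) * of_nat (G (\<tau> l) a b) * U b j)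
                 = (if i = j then eigval l ((\<tau> \<circ> mu) i) else 0)"
    using diag S_involution_less[OF assms(1)] by simp
  moreover have "mset (map (\<tau> \<circ> mu) [0..<n]) = image_mset \<tau> M"
    by (simp add: image_mset.compositionality flip: mu)
  ultimately show ?thesis
    using U nimrep_relabel[OF assms(1)] assms(3) unfolding matches_spectrum_def by blast
qed

lemma nimrep_equiv_relabel:
  assumes "S_involution \<tau>" "nimrep_equiv n G n' G'"
  shows "nimrep_equiv n (\<lambda>l. G (\<tau> l)) n' (\<lambda>l. G' (\<tau> l))"
proof -
  obtain p where "n = n'" "p permutes {..<n}" "\<forall>l<8. \<forall>i<n. \<forall>j<n. G' l i j = G l (p i) (p j)"
    using assms(2) unfolding nimrep_equiv_def by blast
  then show ?thesis
    unfolding nimrep_equiv_def using S_involution_less[OF assms(1)] by blast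
qed

lemma has_unique_nimrep_relabel:
  assumes "S_involution \<tau>" "set_mset M \<subseteq> {..<8}" "has_unique_nimrep M"
  shows "has_unique_nimrep (image_mset \<tau> M)"
  unfolding has_unique_nimrep_def
proof (intro conjI allI impI)
  obtain n K where "matches_spectrum M n K"
    using assms(3) unfolding has_unique_nimrep_def by blast
  then show "\<exists>n G. matches_spectrum (image_mset \<tau> M) n G"
    using matches_spectrum_relabel[OF assms(1,2)] by blast
next
  fix n G n' G'
  assume G: "matches_spectrum (image_mset \<tau> M) n G" and G': "matches_spectrum (image_mset \<tau> M) n' G'"
  have involution: "\<tau> (\<tau> l) = l" for l
    using assms(1) unfolding S_involution_def by blast
  have "set_mset (image_mset \<tau> M) \<subseteq> {..<8}"
    using assms(2) S_involution_less[OF assms(1)] by auto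
  moreover have "image_mset \<tau> (image_mset \<tau> M) = M"
    by (simp add: image_mset.compositionality comp_def involution)
  ultimately have "matches_spectrum M n (\<lambda>l. G (\<tau> l))" "matches_spectrum M n' (\<lambda>l. G' (\<tau> l))"
    using matches_spectrum_relabel[OF assms(1)] G G' by metis+
  then have "nimrep_equiv n (\<lambda>l. G (\<tau> l)) n' (\<lambda>l. G' (\<tau> l))"
    using assms(3) unfolding has_unique_nimrep_def by blast
  then show "nimrep_equiv n G n' G'"
    using nimrep_equiv_relabel[OF assms(1), of n "\<lambda>l. G (\<tau> l)" n' "\<lambda>l. G' (\<tau> l)"]
    by (simp add: involution)
qed

lemma S_involution_transpose_2_3: "S_involution (Transposition.transpose 2 3)"
proof -
  have "\<forall>l<8. \<forall>m<8.
      S_num ! Transposition.transpose 2 3 l ! Transposition.transpose 2 3 m = S_num ! l ! m"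
    unfolding less_8_iff by (simp add: S_num_def)
  then show ?thesis
    unfolding S_involution_def S_def by (simp add: permutes_swap_id)
qed

lemma S_involution_transpose_6_7: "S_involution (Transposition.transpose 6 7)"
proof -
  have "\<forall>l<8. \<forall>m<8.
      S_num ! Transposition.transpose 6 7 l ! Transposition.transpose 6 7 m = S_num ! l ! m"
    unfolding less_8_iff by (simp add: S_num_def)
  then show ?thesis
    unfolding S_involution_def S_def by (simp add: permutes_swap_id)
qed

section \<open>Non-negative integer 3x3 matrices\<close>

definition id_mat :: "nat \<Rightarrow> nat \<Rightarrow> nat" where
  "id_mat i j = (if i = j then 1 else 0)"

(* On the indices 0, 1, 2: the permutation matrix of the transposition fixing a. *)
definition transp_mat :: "nat \<Rightarrow> nat \<Rightarrow> nat \<Rightarrow> nat" where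
  "transp_mat a i j = (if i = a \<and> j = a \<or> i \<noteq> a \<and> j \<noteq> a \<and> i \<noteq> j then 1 else 0)"

definition cross_mat :: "nat \<Rightarrow> nat \<Rightarrow> nat \<Rightarrow> nat" where
  "cross_mat a i j = (if i = a \<or> j = a then 1 else 0)"

lemma id_mat_transpose:
  "id_mat (Transposition.transpose 0 a i) (Transposition.transpose 0 a j) = id_mat i j"
  by (auto simp: id_mat_def Transposition.transpose_def)

lemma transp_mat_transpose:
  "transp_mat 0 (Transposition.transpose 0 a i) (Transposition.transpose 0 a j) = transp_mat a i j"
  by (auto simp: transp_mat_def Transposition.transpose_def)

lemma cross_mat_transpose:
  "cross_mat 0 (Transposition.transpose 0 a i) (Transposition.transpose 0 a j) = cross_mat a i j"
  by (auto simp: cross_mat_def Transposition.transpose_def)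

lemma all_ones_matrix_3:
  fixes Q :: "nat \<Rightarrow> nat \<Rightarrow> nat"
  assumes sym: "\<forall>i<3. \<forall>j<3. Q i j = Q j i" and diag: "\<forall>i<3. 1 \<le> Q i i"
    and square: "\<forall>i<3. \<forall>j<3. (\<Sum>k<3. Q i k * Q k j) = 3 * Q i j"
    and trace: "(\<Sum>i<3. Q i i) = 3"
  shows "\<forall>i<3. \<forall>j<3. Q i j = 1"
proof -
  have "1 \<le> Q 0 0" "1 \<le> Q 1 1" "1 \<le> Q 2 2"
    using diag by simp_all
  with trace have "Q 0 0 = 1" "Q 1 1 = 1" "Q 2 2 = 1"
    unfolding sum_lessThan_3 by linarith+
  moreover have "Q 1 0 = Q 0 1" "Q 2 0 = Q 0 2" "Q 2 1 = Q 1 2"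
    using sym by auto
  moreover note square[rule_format, of 0 0] square[rule_format, of 1 1] square[rule_format, of 2 2]
  ultimately have "Q 0 1 * Q 0 1 + Q 0 2 * Q 0 2 = 2" "Q 0 1 * Q 0 1 + Q 1 2 * Q 1 2 = 2"
    "Q 0 2 * Q 0 2 + Q 1 2 * Q 1 2 = 2" and Q_diag: "Q 0 0 = 1" "Q 1 1 = 1" "Q 2 2 = 1"
    and Q_sym: "Q 1 0 = Q 0 1" "Q 2 0 = Q 0 2" "Q 2 1 = Q 1 2"
    by (simp_all add: sum_lessThan_3)
  then have "Q 0 1 * Q 0 1 = 1" "Q 0 2 * Q 0 2 = 1" "Q 1 2 * Q 1 2 = 1"
    by linarith+
  then have "Q 0 1 = 1" "Q 0 2 = 1" "Q 1 2 = 1"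
    by simp_all
  with Q_diag Q_sym show ?thesis
    unfolding less_3_iff by simp
qed

lemma transp_mat_3_unique:
  fixes P :: "nat \<Rightarrow> nat \<Rightarrow> nat"
  assumes abc: "{..<3} = {a, b, c}" "a \<noteq> b" "a \<noteq> c" "b \<noteq> c"
    and sym: "\<forall>i<3. \<forall>j<3. P i j = P j i"
    and square: "\<forall>i<3. \<forall>j<3. (\<Sum>k<3. P i k * P k j) = id_mat i j"
    and diag: "P a a = 1" "P b b = 0" "P c c = 0"
  shows "\<forall>i<3. \<forall>j<3. P i j = transp_mat a i j"
proof -
  have sum_abc: "(\<Sum>k<3. f k) = f a + f b + (f c :: nat)" for f
    using abc by simp
  have "a < 3" "b < 3"
    using abc(1) by auto
  have P_sym: "P b a = P a b" "P c a = P a c" "P c b = P b c"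
    using sym abc(1) by auto
  have "P a b = 0" "P a c = 0"
    using square[rule_format, of a a] \<open>a < 3\<close> diag P_sym by (auto simp: sum_abc id_mat_def)
  moreover have "P b c = 1"
    using square[rule_format, of b b] \<open>b < 3\<close> diag P_sym \<open>P a b = 0\<close> by (simp add: sum_abc id_mat_def)
  ultimately have "P i j = transp_mat a i j" if "i < 3" "j < 3" for i j
  proof -
    have "i = a \<or> i = b \<or> i = c" "j = a \<or> j = b \<or> j = c"
      using abc(1) that by auto
    then show ?thesis
      using abc(2-4) diag P_sym \<open>P a b = 0\<close> \<open>P a c = 0\<close> \<open>P b c = 1\<close>
      by (elim disjE) (simp_all add: transp_mat_def)
  qed
  then show ?thesis
    by blast
qed

lemma cross_mat_3_unique:
  fixes P Y :: "nat \<Rightarrow> nat \<Rightarrow> nat"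
  assumes abc: "{..<3} = {a, b, c}" "a \<noteq> b" "a \<noteq> c" "b \<noteq> c"
    and sym: "\<forall>i<3. \<forall>j<3. Y i j = Y j i"
    and P: "\<forall>i<3. \<forall>j<3. P i j = transp_mat a i j"
    and PY: "\<forall>i<3. \<forall>j<3. (\<Sum>k<3. P i k * Y k j) = Y i j"
    and YY: "\<forall>i<3. \<forall>j<3. (\<Sum>k<3. Y i k * Y k j) = id_mat i j + P i j + Y i j"
    and trace: "(\<Sum>i<3. Y i i) = 1"
  shows "\<forall>i<3. \<forall>j<3. Y i j = cross_mat a i j"
proof -
  have sum_abc: "(\<Sum>k<3. f k) = f a + f b + (f c :: nat)" for f
    using abc by simp
  have "a < 3" "b < 3" "c < 3"
    using abc(1) by auto
  have Y_sym: "Y b a = Y a b" "Y c a = Y a c" "Y c b = Y b c"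
    using sym abc(1) by auto
  have Y_rows: "Y c j = Y b j" if "j < 3" for j
    using PY[rule_format, of b j] P \<open>b < 3\<close> \<open>c < 3\<close> that abc(2-4)
    by (simp add: sum_abc transp_mat_def)
  then have "Y c c = Y b b" "Y b c = Y b b" "Y a b = Y a c"
    using Y_rows[of a] Y_rows[of b] Y_rows[of c] Y_sym \<open>a < 3\<close> \<open>b < 3\<close> \<open>c < 3\<close> by simp_all
  moreover have "Y a a + Y b b + Y c c = 1"
    using trace by (simp add: sum_abc)
  ultimately have diag: "Y a a = 1" "Y b b = 0" "Y c c = 0" "Y b c = 0"
    by presburger+
  have "Y a a * Y a a + Y a b * Y b a + Y a c * Y c a = 1 + P a a + Y a a"
    using YY[rule_format, of a a] \<open>a < 3\<close> by (simp add: sum_abc id_mat_def)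
  then have "Y a c * Y a c + Y a c * Y a c = 2"
    using diag Y_sym \<open>Y a b = Y a c\<close> P \<open>a < 3\<close> by (simp add: transp_mat_def)
  then have "Y a c * Y a c = 1"
    by linarith
  then have "Y a b = 1" "Y a c = 1"
    using \<open>Y a b = Y a c\<close> by simp_all
  have "Y i j = cross_mat a i j" if "i < 3" "j < 3" for i j
  proof -
    have "i = a \<or> i = b \<or> i = c" "j = a \<or> j = b \<or> j = c"
      using abc(1) that by auto
    then show ?thesis
      using abc(2-4) diag Y_sym \<open>Y a b = 1\<close> \<open>Y a c = 1\<close>
      by (elim disjE) (simp_all add: cross_mat_def)
  qed
  then show ?thesis
    by blast
qed

(* P and Y obey the fusion rules of the sign and the two-dimensional representation of S_3. *)
lemma sign_standard_matrices_3:
  fixes P Y :: "nat \<Rightarrow> nat \<Rightarrow> nat"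
  assumes sym: "\<forall>i<3. \<forall>j<3. P i j = P j i \<and> Y i j = Y j i"
    and PP: "\<forall>i<3. \<forall>j<3. (\<Sum>k<3. P i k * P k j) = id_mat i j"
    and PY: "\<forall>i<3. \<forall>j<3. (\<Sum>k<3. P i k * Y k j) = Y i j"
    and YY: "\<forall>i<3. \<forall>j<3. (\<Sum>k<3. Y i k * Y k j) = id_mat i j + P i j + Y i j"
    and trace_P: "(\<Sum>i<3. P i i) = 1" and trace_Y: "(\<Sum>i<3. Y i i) = 1"
  shows "\<exists>a<3. \<forall>i<3. \<forall>j<3. P i j = transp_mat a i j \<and> Y i j = cross_mat a i j"
proof -
  obtain a b c where abc: "{..<3} = {a, b, c}" "a \<noteq> b" "a \<noteq> c" "b \<noteq> c"
    and P_diag: "P a a = 1" "P b b = 0" "P c c = 0"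
  proof -
    have "P 0 0 + P 1 1 + P 2 2 = 1"
      using trace_P by (simp add: sum_lessThan_3)
    then consider "P 0 0 = 1" "P 1 1 = 0" "P 2 2 = 0" | "P 1 1 = 1" "P 0 0 = 0" "P 2 2 = 0"
      | "P 2 2 = 1" "P 0 0 = 0" "P 1 1 = 0"
      by (auto simp: add_is_1)
    then show thesis
    proof cases
      case 1
      show thesis by (rule that[of 0 1 2]) (use 1 in \<open>auto simp: less_3_iff\<close>)
    next
      case 2
      show thesis by (rule that[of 1 0 2]) (use 2 in \<open>auto simp: less_3_iff\<close>)
    next
      case 3
      show thesis by (rule that[of 2 0 1]) (use 3 in \<open>auto simp: less_3_iff\<close>)
    qed
  qed
  have P: "\<forall>i<3. \<forall>j<3. P i j = transp_mat a i j"
    using transp_mat_3_unique[OF abc _ PP P_diag] sym by blast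
  moreover have "\<forall>i<3. \<forall>j<3. Y i j = cross_mat a i j"
    using cross_mat_3_unique[OF abc _ P PY YY trace_Y] sym by blast
  moreover have "a < 3"
    using abc(1) by auto
  ultimately show ?thesis
    by blast
qed

section \<open>The exponents {0,2,2} and {0,2,6}\<close>

definition nimrep_022 :: "nat \<Rightarrow> nat \<Rightarrow> nat \<Rightarrow> nat" where
  "nimrep_022 l i j =
     (let \<delta> = id_mat i j in [\<delta>, \<delta>, 2 * \<delta>, 1 - \<delta>, 1 - \<delta>, 1 - \<delta>, 1, 1] ! l)"

definition nimrep_026 :: "nat \<Rightarrow> nat \<Rightarrow> nat \<Rightarrow> nat" where
  "nimrep_026 l i j =
     (let \<delta> = id_mat i j; P = transp_mat 0 i j; Y = cross_mat 0 i j
      in [\<delta>, P, \<delta> + P, Y, Y, Y, \<delta> + Y, P + Y] ! l)"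

lemma matches_spectrum_nimrep_022: "matches_spectrum {#0, 2, 2#} 3 nimrep_022"
proof (rule matches_spectrum_of_orthogonal_eigenbasis
    [where mu = "\<lambda>i. [0, 2, 2] ! i" and V = "\<lambda>a i. [[1, 1, 1], [1, -1, 0], [1, 1, -2]] ! i ! a"])
  show "\<forall>l<8. \<forall>i<3. \<forall>a<3. (\<Sum>b<3. int (nimrep_022 l a b) * [[1, 1, 1], [1, -1, 0], [1, 1, -2]] ! i ! b)
      = eigval_int l ([0, 2, 2] ! i) * [[1, 1, 1], [1, -1, 0], [1, 1, -2]] ! i ! a"
    unfolding less_8_iff less_3_iff
    by (simp add: sum_lessThan_3 nimrep_022_def id_mat_def eigval_int_def S_num_def)
qed (simp_all add: upt_rec less_3_iff sum_lessThan_3)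

lemma matches_spectrum_nimrep_026: "matches_spectrum {#0, 2, 6#} 3 nimrep_026"
proof (rule matches_spectrum_of_orthogonal_eigenbasis
    [where mu = "\<lambda>i. [0, 2, 6] ! i" and V = "\<lambda>a i. [[2, 1, 1], [1, -1, -1], [0, 1, -1]] ! i ! a"])
  show "\<forall>l<8. \<forall>i<3. \<forall>a<3. (\<Sum>b<3. int (nimrep_026 l a b) * [[2, 1, 1], [1, -1, -1], [0, 1, -1]] ! i ! b)
      = eigval_int l ([0, 2, 6] ! i) * [[2, 1, 1], [1, -1, -1], [0, 1, -1]] ! i ! a"
    unfolding less_8_iff less_3_iff
    by (simp add: sum_lessThan_3 nimrep_026_def id_mat_def transp_mat_def cross_mat_def
        eigval_int_def S_num_def)
qed (simp_all add: upt_rec less_3_iff sum_lessThan_3)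

lemma matches_spectrum_022_relations:
  assumes G: "matches_spectrum {#0, 2, 2#} n G" and "i < n" "j < n"
  shows "G 0 i j = id_mat i j" "G 1 i j = G 0 i j" "G 2 i j = G 0 i j + G 0 i j"
    "G 4 i j = G 3 i j" "G 5 i j = G 3 i j" "G 6 i j = G 0 i j + G 3 i j" "G 7 i j = G 6 i j"
proof -
  have "nimrep n G"
    using G unfolding matches_spectrum_def by simp
  then show "G 0 i j = id_mat i j"
    using assms(2,3) unfolding nimrep_def id_mat_def by simp
  note relation = matches_spectrum_linear_relation[OF G _ _ _ assms(2,3)]
  show "G 1 i j = G 0 i j" "G 2 i j = G 0 i j + G 0 i j" "G 4 i j = G 3 i j" "G 5 i j = G 3 i j"
    "G 6 i j = G 0 i j + G 3 i j" "G 7 i j = G 6 i j"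
    using relation[of 1 "[0]"] relation[of 2 "[0, 0]"] relation[of 4 "[3]"] relation[of 5 "[3]"]
      relation[of 6 "[0, 3]"] relation[of 7 "[6]"]
    by (simp_all add: eigval_def S_def S_num_def)
qed

lemma matches_spectrum_022_eq:
  assumes G: "matches_spectrum {#0, 2, 2#} n G"
  shows "\<forall>l<8. \<forall>i<n. \<forall>j<n. G l i j = nimrep_022 l i j"
proof -
  have n: "n = 3"
    using matches_spectrum_size[OF G] by simp
  have nim: "nimrep 3 G"
    using G n unfolding matches_spectrum_def by simp
  note relations = matches_spectrum_022_relations[OF G[unfolded n]]
  have "(\<Sum>k<3. G 6 i k * G 6 k j) = 3 * G 6 i j" if "i < 3" "j < 3" for i j
    using nimrep_fusion_rule[OF nim _ _ that, of 6 6 "[0, 2, 3, 4, 5]"] relations[OF that]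
    by (simp add: sum_lessThan_8 fusion_def S_def S_num_def)
  moreover have "(\<Sum>i<3. G 6 i i) = 3"
    using matches_spectrum_trace[OF G, of 6 3] n by (simp add: eigval_def S_def S_num_def)
  moreover have "\<forall>i<3. \<forall>j<3. G 6 i j = G 6 j i"
    using nim unfolding nimrep_def prim_conj_def by simp
  ultimately have "\<forall>i<3. \<forall>j<3. G 6 i j = 1"
    by (intro all_ones_matrix_3) (simp_all add: relations id_mat_def)
  then have G6: "G 6 i j = 1" and G3: "G 3 i j = 1 - id_mat i j" if "i < 3" "j < 3" for i j
    using relations[OF that] that by simp_all
  show ?thesis
  proof (intro allI impI)
    fix l i j :: nat assume "l < 8" "i < n" "j < n"
    then have ij: "i < 3" "j < 3"
      using n by simp_all
    from less_8_cases[OF \<open>l < 8\<close>] show "G l i j = nimrep_022 l i j"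
      by (elim disjE; hypsubst; simp only: relations(1-5,7)[OF ij] G3[OF ij] G6[OF ij];
          simp add: nimrep_022_def)
  qed
qed

lemma matches_spectrum_026_relations:
  assumes G: "matches_spectrum {#0, 2, 6#} n G" and "i < n" "j < n"
  shows "G 0 i j = id_mat i j" "G 2 i j = G 0 i j + G 1 i j" "G 4 i j = G 3 i j" "G 5 i j = G 3 i j"
    "G 6 i j = G 0 i j + G 3 i j" "G 7 i j = G 1 i j + G 3 i j"
proof -
  have "nimrep n G"
    using G unfolding matches_spectrum_def by simp
  then show "G 0 i j = id_mat i j"
    using assms(2,3) unfolding nimrep_def id_mat_def by simp
  note relation = matches_spectrum_linear_relation[OF G _ _ _ assms(2,3)]
  show "G 2 i j = G 0 i j + G 1 i j" "G 4 i j = G 3 i j" "G 5 i j = G 3 i j"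
    "G 6 i j = G 0 i j + G 3 i j" "G 7 i j = G 1 i j + G 3 i j"
    using relation[of 2 "[0, 1]"] relation[of 4 "[3]"] relation[of 5 "[3]"] relation[of 6 "[0, 3]"]
      relation[of 7 "[1, 3]"]
    by (simp_all add: eigval_def S_def S_num_def)
qed

lemma matches_spectrum_026_generators:
  assumes G: "matches_spectrum {#0, 2, 6#} n G"
  shows "\<exists>a<3. \<forall>i<n. \<forall>j<n. G 1 i j = transp_mat a i j \<and> G 3 i j = cross_mat a i j"
proof -
  have n: "n = 3"
    using matches_spectrum_size[OF G] by simp
  have nim: "nimrep 3 G"
    using G n unfolding matches_spectrum_def by simp
  have "(\<Sum>k<3. G 1 i k * G 1 k j) = id_mat i j" and "(\<Sum>k<3. G 1 i k * G 3 k j) = G 3 i j"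
    and "(\<Sum>k<3. G 3 i k * G 3 k j) = id_mat i j + G 1 i j + G 3 i j" if "i < 3" "j < 3" for i j
    using nimrep_fusion_rule[OF nim _ _ that, of 1 1 "[0]"]
      nimrep_fusion_rule[OF nim _ _ that, of 1 3 "[3]"]
      nimrep_fusion_rule[OF nim _ _ that, of 3 3 "[0, 1, 3]"]
      matches_spectrum_026_relations(1)[OF G[unfolded n] that]
    by (simp_all add: sum_lessThan_8 fusion_def S_def S_num_def)
  moreover have "(\<Sum>i<3. G 1 i i) = 1" "(\<Sum>i<3. G 3 i i) = 1"
    using matches_spectrum_trace[OF G, of 1 1] matches_spectrum_trace[OF G, of 3 1] n
    by (simp_all add: eigval_def S_def S_num_def)
  moreover have "\<forall>i<3. \<forall>j<3. G 1 i j = G 1 j i \<and> G 3 i j = G 3 j i"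
    using nim unfolding nimrep_def prim_conj_def by simp
  ultimately show ?thesis
    unfolding n by (intro sign_standard_matrices_3) simp_all
qed

lemma matches_spectrum_026_conj:
  assumes G: "matches_spectrum {#0, 2, 6#} n G"
  shows "\<exists>p. p permutes {..<n} \<and> (\<forall>l<8. \<forall>i<n. \<forall>j<n. G l i j = nimrep_026 l (p i) (p j))"
proof -
  obtain a where "a < 3"
    and generators: "\<forall>i<n. \<forall>j<n. G 1 i j = transp_mat a i j \<and> G 3 i j = cross_mat a i j"
    using matches_spectrum_026_generators[OF G] by blast
  have "Transposition.transpose 0 a permutes {..<n}"
    using \<open>a < 3\<close> matches_spectrum_size[OF G] by (simp add: permutes_swap_id)
  moreover have "G l i j = nimrep_026 l (Transposition.transpose 0 a i) (Transposition.transpose 0 a j)"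
    if "l < 8" "i < n" "j < n" for l i j
  proof -
    have "nimrep_026 l (Transposition.transpose 0 a i) (Transposition.transpose 0 a j)
        = (let \<delta> = id_mat i j; P = transp_mat a i j; Y = cross_mat a i j
           in [\<delta>, P, \<delta> + P, Y, Y, Y, \<delta> + Y, P + Y] ! l)"
      by (simp add: nimrep_026_def id_mat_transpose transp_mat_transpose cross_mat_transpose)
    with less_8_cases[OF \<open>l < 8\<close>] generators that show ?thesis
      by (elim disjE; hypsubst; simp only: matches_spectrum_026_relations[OF G \<open>i < n\<close> \<open>j < n\<close>];
          simp)
  qed
  ultimately show ?thesis
    by blast
qed

lemma has_unique_nimrep_022: "has_unique_nimrep {#0, 2, 2#}"
proof (rule has_unique_nimrep_if_conjugate[OF matches_spectrum_nimrep_022])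
  fix n G assume "matches_spectrum {#0, 2, 2#} n G"
  then show "\<exists>p. p permutes {..<n} \<and> (\<forall>l<8. \<forall>i<n. \<forall>j<n. G l i j = nimrep_022 l (p i) (p j))"
    using matches_spectrum_022_eq[of n G] by (intro exI[of _ id]) (simp add: permutes_id)
qed

lemma has_unique_nimrep_026: "has_unique_nimrep {#0, 2, 6#}"
  by (rule has_unique_nimrep_if_conjugate[OF matches_spectrum_nimrep_026 matches_spectrum_026_conj])

section \<open>The trace three modular invariants\<close>

lemma Exp_values:
  "Exp Z24 = {#0, 2, 2#}" "Exp Z42 = {#0, 2, 2#}" "Exp Z35 = {#0, 3, 3#}" "Exp Z53 = {#0, 3, 3#}"
  "Exp Z44 = {#0, 2, 6#}" "Exp Z44p = {#0, 2, 7#}" "Exp Z55p = {#0, 3, 7#}"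
  by (simp_all add: Exp_def sum_lessThan_8 Z24_def Z42_def Z35_def Z53_def Z44_def Z44p_def Z55p_def
      lin_prod_def s2_def s3_def s4_def s5_def vec_of_def mat_of_def numeral_2_eq_2)

theorem proposition6p5:
  shows "\<forall>Z \<in> {Z24, Z42, Z35, Z53, Z44, Z55p, Z44p}.
           (\<exists>n G. matches Z n G) \<and>
           (\<forall>n G n' G'. matches Z n G \<longrightarrow> matches Z n' G' \<longrightarrow> nimrep_equiv n G n' G')"
proof -
  have "has_unique_nimrep {#0, 3, 3#}"
    using has_unique_nimrep_relabel[OF S_involution_transpose_2_3 _ has_unique_nimrep_022] by simp
  moreover have unique_027: "has_unique_nimrep {#0, 2, 7#}"
    using has_unique_nimrep_relabel[OF S_involution_transpose_6_7 _ has_unique_nimrep_026] by simp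
  moreover have "has_unique_nimrep {#0, 3, 7#}"
    using has_unique_nimrep_relabel[OF S_involution_transpose_2_3 _ unique_027] by simp
  ultimately have "\<forall>Z \<in> {Z24, Z42, Z35, Z53, Z44, Z55p, Z44p}. has_unique_nimrep (Exp Z)"
    using has_unique_nimrep_022 has_unique_nimrep_026 by (simp add: Exp_values)
  then show ?thesis
    unfolding has_unique_nimrep_def matches_iff_matches_spectrum .
qed

end
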